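(* Let $k$ be a field and $\mathsf{E}$ a left strictly locally finite $k$-linear category. Then the class of contrafinite left $\mathsf{E}$-modules is closed under extensions in the category of left $\mathsf{E}$-modules: if $0\to P\to T\to Q\to0$ is a short exact sequence of left $\mathsf{E}$-modules with $P$ and $Q$ contrafinite, then $T$ is contrafinite.
   Context: A small $k$-linear category $\mathsf{E}$ has $k$-vector spaces $\operatorname{Hom}_\mathsf{E}(x,y)$, $k$-bilinear associative composition and identities with $\mathrm{id}_x\ne0$. A left $\mathsf{E}$-module is a $k$-linear functor $P:\mathsf{E}\to k\text{-Vect}$ (action maps $\operatorname{Hom}_\mathsf{E}(x,y)\otimes_kP(x)\to P(y)$). Write $x\preceq y$ if there are $n\ge1$ and objects $x=z_0,\dots,z_n=y$ with $\operatorname{Hom}_\mathsf{E}(z_{i-1},z_i)\neq0$ for all $i$; $x\prec y$ means $x\preceq y$ and not $y\preceq x$. $\mathsf{E}$ is locally finite if all Hom spaces are finite-dimensional and every $\{z:x\preceq z\preceq y\}$ is finite; left strictly locally finite if moreover for every $y$ there is a finite set $X_y$ of objects with $x\prec y$ for $x\in X_y$ such that every $f:z\to y$ with $z\prec y$ equals $\sum_{i=1}^nh_ig_i$ ($n\ge0$) with $g_i:z\to x_i$, $h_i:x_i\to y$, $x_i\in X_y$. A left $\mathsf{E}$-module $P$ is contrafinite if for every object $y$ there is a finite set of objects $A$ such that the action map $\operatorname{Hom}_\mathsf{E}(x,y)\otimes_kP(x)\to P(y)$ vanishes for all $x\notin A$. *)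

theory Defs
  imports Complex_Main
begin

text \<open>
Encoding of a small k-linear category E (k a field, type 'k):
objects form the type 'o; all morphisms live in one ambient k-vector space
'm (with scalar multiplication sc); Hom(x,y) is the subspace H x y of 'm;
cmp x y z g f is the composite g o f of f : x -> y and g : y -> z;
ident x is the identity of x.  Every small k-linear category can be encoded
this way (take 'm to be the direct sum of all Hom spaces).
\<close>

definition klin_cat ::
  "('k::field \<Rightarrow> 'm::ab_group_add \<Rightarrow> 'm) \<Rightarrow> ('o \<Rightarrow> 'o \<Rightarrow> 'm set)
   \<Rightarrow> ('o \<Rightarrow> 'o \<Rightarrow> 'o \<Rightarrow> 'm \<Rightarrow> 'm \<Rightarrow> 'm) \<Rightarrow> ('o \<Rightarrow> 'm) \<Rightarrow> bool" where
  "klin_cat sc H cmp ident \<longleftrightarrow>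
     vector_space sc \<and>
     (\<forall>x y. module.subspace sc (H x y)) \<and>
     (\<forall>x y z f g. f \<in> H x y \<longrightarrow> g \<in> H y z \<longrightarrow> cmp x y z g f \<in> H x z) \<and>
     (\<forall>x y z g f1 f2. g \<in> H y z \<longrightarrow> f1 \<in> H x y \<longrightarrow> f2 \<in> H x y \<longrightarrow>
        cmp x y z g (f1 + f2) = cmp x y z g f1 + cmp x y z g f2) \<and>
     (\<forall>x y z g1 g2 f. g1 \<in> H y z \<longrightarrow> g2 \<in> H y z \<longrightarrow> f \<in> H x y \<longrightarrow>
        cmp x y z (g1 + g2) f = cmp x y z g1 f + cmp x y z g2 f) \<and>
     (\<forall>x y z g f c. g \<in> H y z \<longrightarrow> f \<in> H x y \<longrightarrow>
        cmp x y z g (sc c f) = sc c (cmp x y z g f) \<and>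
        cmp x y z (sc c g) f = sc c (cmp x y z g f)) \<and>
     (\<forall>w x y z f g h. f \<in> H w x \<longrightarrow> g \<in> H x y \<longrightarrow> h \<in> H y z \<longrightarrow>
        cmp w y z h (cmp w x y g f) = cmp w x z (cmp x y z h g) f) \<and>
     (\<forall>x. ident x \<in> H x x \<and> ident x \<noteq> 0) \<and>
     (\<forall>x y f. f \<in> H x y \<longrightarrow> cmp x y y (ident y) f = f \<and> cmp x x y f (ident x) = f)"

definition cat_le :: "('o \<Rightarrow> 'o \<Rightarrow> 'm::zero set) \<Rightarrow> 'o \<Rightarrow> 'o \<Rightarrow> bool" where
  "cat_le H = tranclp (\<lambda>x y. H x y \<noteq> {0})"

definition cat_less :: "('o \<Rightarrow> 'o \<Rightarrow> 'm::zero set) \<Rightarrow> 'o \<Rightarrow> 'o \<Rightarrow> bool" where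
  "cat_less H x y \<longleftrightarrow> cat_le H x y \<and> \<not> cat_le H y x"

definition locally_finite_cat ::
  "('k::field \<Rightarrow> 'm::ab_group_add \<Rightarrow> 'm) \<Rightarrow> ('o \<Rightarrow> 'o \<Rightarrow> 'm set) \<Rightarrow> bool" where
  "locally_finite_cat sc H \<longleftrightarrow>
     (\<forall>x y. \<exists>B. finite B \<and> B \<subseteq> H x y \<and> H x y \<subseteq> module.span sc B) \<and>
     (\<forall>x y. finite {z. cat_le H x z \<and> cat_le H z y})"

definition left_strictly_locally_finite ::
  "('k::field \<Rightarrow> 'm::ab_group_add \<Rightarrow> 'm) \<Rightarrow> ('o \<Rightarrow> 'o \<Rightarrow> 'm set)
   \<Rightarrow> ('o \<Rightarrow> 'o \<Rightarrow> 'o \<Rightarrow> 'm \<Rightarrow> 'm \<Rightarrow> 'm) \<Rightarrow> bool" where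
  "left_strictly_locally_finite sc H cmp \<longleftrightarrow>
     locally_finite_cat sc H \<and>
     (\<forall>y. \<exists>X. finite X \<and> (\<forall>x\<in>X. cat_less H x y) \<and>
        (\<forall>z f. cat_less H z y \<longrightarrow> f \<in> H z y \<longrightarrow>
           (\<exists>(n::nat) xs g h. (\<forall>i<n. xs i \<in> X \<and> g i \<in> H z (xs i) \<and> h i \<in> H (xs i) y) \<and>
              f = (\<Sum>i<n. cmp z (xs i) y (h i) (g i)))))"

definition left_module ::
  "('k::field \<Rightarrow> 'm::ab_group_add \<Rightarrow> 'm) \<Rightarrow> ('o \<Rightarrow> 'o \<Rightarrow> 'm set)
   \<Rightarrow> ('o \<Rightarrow> 'o \<Rightarrow> 'o \<Rightarrow> 'm \<Rightarrow> 'm \<Rightarrow> 'm) \<Rightarrow> ('o \<Rightarrow> 'm)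
   \<Rightarrow> ('k \<Rightarrow> 'v::ab_group_add \<Rightarrow> 'v) \<Rightarrow> ('o \<Rightarrow> 'v set) \<Rightarrow> ('o \<Rightarrow> 'o \<Rightarrow> 'm \<Rightarrow> 'v \<Rightarrow> 'v) \<Rightarrow> bool" where
  "left_module sc H cmp ident scP P act \<longleftrightarrow>
     vector_space scP \<and>
     (\<forall>x. module.subspace scP (P x)) \<and>
     (\<forall>x y f p. f \<in> H x y \<longrightarrow> p \<in> P x \<longrightarrow> act x y f p \<in> P y) \<and>
     (\<forall>x y f p1 p2. f \<in> H x y \<longrightarrow> p1 \<in> P x \<longrightarrow> p2 \<in> P x \<longrightarrow>
        act x y f (p1 + p2) = act x y f p1 + act x y f p2) \<and>
     (\<forall>x y f1 f2 p. f1 \<in> H x y \<longrightarrow> f2 \<in> H x y \<longrightarrow> p \<in> P x \<longrightarrow>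
        act x y (f1 + f2) p = act x y f1 p + act x y f2 p) \<and>
     (\<forall>x y f p c. f \<in> H x y \<longrightarrow> p \<in> P x \<longrightarrow>
        act x y f (scP c p) = scP c (act x y f p) \<and>
        act x y (sc c f) p = scP c (act x y f p)) \<and>
     (\<forall>x y z f g p. f \<in> H x y \<longrightarrow> g \<in> H y z \<longrightarrow> p \<in> P x \<longrightarrow>
        act x z (cmp x y z g f) p = act y z g (act x y f p)) \<and>
     (\<forall>x p. p \<in> P x \<longrightarrow> act x x (ident x) p = p)"

definition module_morphism ::
  "('o \<Rightarrow> 'o \<Rightarrow> 'm set)
   \<Rightarrow> ('k \<Rightarrow> 'v::ab_group_add \<Rightarrow> 'v) \<Rightarrow> ('o \<Rightarrow> 'v set) \<Rightarrow> ('o \<Rightarrow> 'o \<Rightarrow> 'm \<Rightarrow> 'v \<Rightarrow> 'v)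
   \<Rightarrow> ('k \<Rightarrow> 'w::ab_group_add \<Rightarrow> 'w) \<Rightarrow> ('o \<Rightarrow> 'w set) \<Rightarrow> ('o \<Rightarrow> 'o \<Rightarrow> 'm \<Rightarrow> 'w \<Rightarrow> 'w)
   \<Rightarrow> ('o \<Rightarrow> 'v \<Rightarrow> 'w) \<Rightarrow> bool" where
  "module_morphism H scP P actP scQ Q actQ \<phi> \<longleftrightarrow>
     (\<forall>x p. p \<in> P x \<longrightarrow> \<phi> x p \<in> Q x) \<and>
     (\<forall>x p1 p2. p1 \<in> P x \<longrightarrow> p2 \<in> P x \<longrightarrow> \<phi> x (p1 + p2) = \<phi> x p1 + \<phi> x p2) \<and>
     (\<forall>x p c. p \<in> P x \<longrightarrow> \<phi> x (scP c p) = scQ c (\<phi> x p)) \<and>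
     (\<forall>x y f p. f \<in> H x y \<longrightarrow> p \<in> P x \<longrightarrow> \<phi> y (actP x y f p) = actQ x y f (\<phi> x p))"

definition short_exact ::
  "('o \<Rightarrow> 'v::ab_group_add set) \<Rightarrow> ('o \<Rightarrow> 'w::ab_group_add set) \<Rightarrow> ('o \<Rightarrow> 'u::ab_group_add set)
   \<Rightarrow> ('o \<Rightarrow> 'v \<Rightarrow> 'w) \<Rightarrow> ('o \<Rightarrow> 'w \<Rightarrow> 'u) \<Rightarrow> bool" where
  "short_exact P T Q \<phi> \<psi> \<longleftrightarrow>
     (\<forall>x. inj_on (\<phi> x) (P x) \<and> \<phi> x ` P x = {t \<in> T x. \<psi> x t = 0} \<and> \<psi> x ` T x = Q x)"

definition contrafinite ::
  "('o \<Rightarrow> 'o \<Rightarrow> 'm set) \<Rightarrow> ('o \<Rightarrow> 'v::zero set) \<Rightarrow> ('o \<Rightarrow> 'o \<Rightarrow> 'm \<Rightarrow> 'v \<Rightarrow> 'v) \<Rightarrow> bool" where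
  "contrafinite H P act \<longleftrightarrow>
     (\<forall>y. \<exists>A. finite A \<and> (\<forall>x. x \<notin> A \<longrightarrow> (\<forall>f\<in>H x y. \<forall>p\<in>P x. act x y f p = 0)))"

end

theory Submission
  imports Defs
begin

text \<open>
  Fix an object y and call z negligible if the composite action T(x) \<rightarrow> T(z) \<rightarrow> T(y)
  vanishes for all x outside a finite set.  Since P is contrafinite, P(z) \<rightarrow> P(y) vanishes
  for z outside a finite set B, and every such z is negligible: for x outside the finite set
  witnessing contrafiniteness of Q at z, the image of T(x) in T(z) dies in Q(z), hence lies in
  P(z), and so dies in T(y).  The objects of B are handled by induction along \<prec>, which is
  well founded on the finite set B: a morphism x \<rightarrow> z with x \<prec> z is a sum of morphisms
  factoring through the finite set X_z of objects below z, and the x with z \<preceq> x \<preceq> z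
  form a finite set.  Negligibility of y itself, applied to the identity of y, is
  contrafiniteness of T at y.
\<close>

locale E_module =
  fixes sc :: "'k::field \<Rightarrow> 'm::ab_group_add \<Rightarrow> 'm"
    and H :: "'o \<Rightarrow> 'o \<Rightarrow> 'm set"
    and cmp :: "'o \<Rightarrow> 'o \<Rightarrow> 'o \<Rightarrow> 'm \<Rightarrow> 'm \<Rightarrow> 'm"
    and ident :: "'o \<Rightarrow> 'm"
    and scP :: "'k \<Rightarrow> 'v::ab_group_add \<Rightarrow> 'v"
    and P :: "'o \<Rightarrow> 'v set"
    and act :: "'o \<Rightarrow> 'o \<Rightarrow> 'm \<Rightarrow> 'v \<Rightarrow> 'v"
  assumes is_klin_cat: "klin_cat sc H cmp ident"
    and is_left_module: "left_module sc H cmp ident scP P act"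
begin

lemma module_sc: "module sc"
  using is_klin_cat unfolding klin_cat_def module_iff_vector_space by simp

lemma module_scP: "module scP"
  using is_left_module unfolding left_module_def module_iff_vector_space by simp

lemma subspace_hom: "module.subspace sc (H x y)"
  using is_klin_cat unfolding klin_cat_def by simp

lemma subspace_fiber: "module.subspace scP (P x)"
  using is_left_module unfolding left_module_def by simp

lemma zero_in_hom: "0 \<in> H x y"
  by (rule module.subspace_0[OF module_sc subspace_hom])

lemma zero_in_fiber: "0 \<in> P x"
  by (rule module.subspace_0[OF module_scP subspace_fiber])

lemma hom_sum_closed: "(\<And>i. i \<in> I \<Longrightarrow> g i \<in> H x y) \<Longrightarrow> (\<Sum>i\<in>I. g i) \<in> H x y"
  by (rule module.subspace_sum[OF module_sc subspace_hom])

lemma fiber_sum_closed: "(\<And>i. i \<in> I \<Longrightarrow> p i \<in> P x) \<Longrightarrow> (\<Sum>i\<in>I. p i) \<in> P x"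
  by (rule module.subspace_sum[OF module_scP subspace_fiber])

lemma cmp_closed: "f \<in> H x y \<Longrightarrow> g \<in> H y z \<Longrightarrow> cmp x y z g f \<in> H x z"
  using is_klin_cat unfolding klin_cat_def by auto

lemma ident_in_hom: "ident x \<in> H x x"
  using is_klin_cat unfolding klin_cat_def by auto

lemma act_closed: "f \<in> H x y \<Longrightarrow> p \<in> P x \<Longrightarrow> act x y f p \<in> P y"
  using is_left_module unfolding left_module_def by auto

lemma act_add_right:
  "f \<in> H x y \<Longrightarrow> p1 \<in> P x \<Longrightarrow> p2 \<in> P x \<Longrightarrow> act x y f (p1 + p2) = act x y f p1 + act x y f p2"
  using is_left_module unfolding left_module_def by auto

lemma act_add_left:
  "f1 \<in> H x y \<Longrightarrow> f2 \<in> H x y \<Longrightarrow> p \<in> P x \<Longrightarrow> act x y (f1 + f2) p = act x y f1 p + act x y f2 p"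
  using is_left_module unfolding left_module_def by auto

lemma act_cmp:
  "f \<in> H x y \<Longrightarrow> g \<in> H y z \<Longrightarrow> p \<in> P x \<Longrightarrow> act x z (cmp x y z g f) p = act y z g (act x y f p)"
  using is_left_module unfolding left_module_def by auto

lemma act_ident: "p \<in> P x \<Longrightarrow> act x x (ident x) p = p"
  using is_left_module unfolding left_module_def by auto

lemma act_zero_right: "f \<in> H x y \<Longrightarrow> act x y f 0 = 0"
  using act_add_right[of f x y 0 0] zero_in_fiber by simp

lemma act_zero_left: "p \<in> P x \<Longrightarrow> act x y 0 p = 0"
  using act_add_left[of 0 x y 0 p] zero_in_hom by simp

lemma act_sum_left:
  assumes "\<And>i. i \<in> I \<Longrightarrow> g i \<in> H x y" "p \<in> P x"
  shows "act x y (\<Sum>i\<in>I. g i) p = (\<Sum>i\<in>I. act x y (g i) p)"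
  using assms(1)
proof (induction I rule: infinite_finite_induct)
  case (insert i I)
  then have "(\<Sum>j\<in>I. g j) \<in> H x y" by (simp add: hom_sum_closed)
  with insert show ?case by (simp add: act_add_left assms(2))
qed (simp_all add: act_zero_left assms(2))

lemma act_sum_right:
  assumes "\<And>i. i \<in> I \<Longrightarrow> p i \<in> P x" "f \<in> H x y"
  shows "act x y f (\<Sum>i\<in>I. p i) = (\<Sum>i\<in>I. act x y f (p i))"
  using assms(1)
proof (induction I rule: infinite_finite_induct)
  case (insert i I)
  then have "(\<Sum>j\<in>I. p j) \<in> P x" by (simp add: fiber_sum_closed)
  with insert show ?case by (simp add: act_add_right assms(2))
qed (simp_all add: act_zero_right assms(2))

lemma act_act_sum_cmp:
  assumes "p \<in> P x" "h \<in> H z y"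
    and "\<And>i. i \<in> I \<Longrightarrow> gs i \<in> H x (xs i) \<and> hs i \<in> H (xs i) z"
  shows "act z y h (act x z (\<Sum>i\<in>I. cmp x (xs i) z (hs i) (gs i)) p) =
    (\<Sum>i\<in>I. act (xs i) y (cmp (xs i) z y h (hs i)) (act x (xs i) (gs i) p))"
proof -
  have "act x z (\<Sum>i\<in>I. cmp x (xs i) z (hs i) (gs i)) p =
      (\<Sum>i\<in>I. act (xs i) z (hs i) (act x (xs i) (gs i) p))"
    using assms by (simp add: act_sum_left cmp_closed act_cmp)
  then show ?thesis
    using assms by (simp add: act_sum_right act_closed act_cmp)
qed

end

definition contrafinite_via ::
  "('o \<Rightarrow> 'o \<Rightarrow> 'm set) \<Rightarrow> ('o \<Rightarrow> 'v::zero set) \<Rightarrow> ('o \<Rightarrow> 'o \<Rightarrow> 'm \<Rightarrow> 'v \<Rightarrow> 'v) \<Rightarrow> 'o \<Rightarrow> 'o \<Rightarrow> bool" where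
  "contrafinite_via H P act z y \<longleftrightarrow>
     (\<exists>A. finite A \<and> (\<forall>x. x \<notin> A \<longrightarrow>
        (\<forall>g\<in>H x z. \<forall>h\<in>H z y. \<forall>p\<in>P x. act z y h (act x z g p) = 0)))"

lemma (in E_module) contrafinite_if_via_self:
  assumes "\<And>y. contrafinite_via H P act y y"
  shows "contrafinite H P act"
  unfolding contrafinite_def
proof
  fix y
  obtain A where "finite A" and A: "\<And>x g p. x \<notin> A \<Longrightarrow> g \<in> H x y \<Longrightarrow> p \<in> P x \<Longrightarrow>
      act y y (ident y) (act x y g p) = 0"
    using assms[of y] ident_in_hom unfolding contrafinite_via_def by meson
  have "act x y g p = 0" if "x \<notin> A" "g \<in> H x y" "p \<in> P x" for x g p
    using A[OF that] act_ident[OF act_closed[OF that(2,3)]] by simp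
  with \<open>finite A\<close> show "\<exists>A. finite A \<and> (\<forall>x. x \<notin> A \<longrightarrow> (\<forall>f\<in>H x y. \<forall>p\<in>P x. act x y f p = 0))"
    by blast
qed

lemma cat_le_if_nonzero: "f \<in> H x y \<Longrightarrow> f \<noteq> 0 \<Longrightarrow> cat_le H x y"
  unfolding cat_le_def by (rule tranclp.r_into_trancl) blast

lemma transp_cat_less: "transp (cat_less H)"
  unfolding cat_less_def cat_le_def by (intro transpI) (meson tranclp_trans)

lemma irreflp_cat_less: "irreflp (cat_less H)"
  unfolding cat_less_def by (simp add: irreflpI)

lemma strict_order_induct_outside_finite:
  assumes "transp R" "irreflp R" "finite B"
    and outside: "\<And>z. z \<notin> B \<Longrightarrow> V z"
    and step: "\<And>z. z \<in> B \<Longrightarrow> (\<And>w. R w z \<Longrightarrow> V w) \<Longrightarrow> V z"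
  shows "V z"
proof (induction z rule: measure_induct_rule[of "\<lambda>z. card {b \<in> B. R b z}"])
  case (less z)
  show ?case
  proof (cases "z \<in> B")
    case True
    show ?thesis
    proof (rule step[OF True])
      fix w assume "R w z"
      show "V w"
      proof (cases "w \<in> B")
        case True
        have "{b \<in> B. R b w} \<subset> {b \<in> B. R b z}"
          using \<open>R w z\<close> True assms(1,2) by (auto dest: transpD irreflpD)
        then show ?thesis by (intro less.IH psubset_card_mono) (simp add: \<open>finite B\<close>)
      qed (rule outside)
    qed
  qed (rule outside)
qed

lemma (in E_module) contrafinite_via_if_factors_through:
  assumes "finite {u. cat_le H z u \<and> cat_le H u z}"
    and "finite X"
    and factor: "\<And>x f. cat_less H x z \<Longrightarrow> f \<in> H x z \<Longrightarrow>
      \<exists>(n::nat) xs g h. (\<forall>i<n. xs i \<in> X \<and> g i \<in> H x (xs i) \<and> h i \<in> H (xs i) z) \<and>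
        f = (\<Sum>i<n. cmp x (xs i) z (h i) (g i))"
    and via: "\<And>w. w \<in> X \<Longrightarrow> contrafinite_via H P act w y"
  shows "contrafinite_via H P act z y"
proof -
  have "\<forall>w\<in>X. \<exists>A. finite A \<and> (\<forall>x. x \<notin> A \<longrightarrow>
      (\<forall>g\<in>H x w. \<forall>h\<in>H w y. \<forall>p\<in>P x. act w y h (act x w g p) = 0))"
    using via unfolding contrafinite_via_def by blast
  then obtain A where A_finite: "\<And>w. w \<in> X \<Longrightarrow> finite (A w)"
    and A: "\<And>w x g h p. w \<in> X \<Longrightarrow> x \<notin> A w \<Longrightarrow> g \<in> H x w \<Longrightarrow> h \<in> H w y \<Longrightarrow> p \<in> P x \<Longrightarrow>
      act w y h (act x w g p) = 0"
    by (metis bchoice)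
  define C where "C = {u. cat_le H z u \<and> cat_le H u z} \<union> (\<Union>w\<in>X. A w)"
  have "finite C"
    unfolding C_def using assms(1,2) A_finite by simp
  moreover have "act z y h (act x z g p) = 0"
    if x: "x \<notin> C" and g: "g \<in> H x z" and h: "h \<in> H z y" and p: "p \<in> P x" for x g h p
  proof (cases "g = 0")
    case True
    then show ?thesis using p h by (simp add: act_zero_left act_zero_right)
  next
    case False
    with g have "cat_le H x z"
      by (rule cat_le_if_nonzero)
    moreover have "\<not> cat_le H z x"
      using x \<open>cat_le H x z\<close> unfolding C_def by simp
    ultimately have "cat_less H x z"
      unfolding cat_less_def by simp
    then obtain n :: nat and xs gs hs
      where fac: "\<forall>i<n. xs i \<in> X \<and> gs i \<in> H x (xs i) \<and> hs i \<in> H (xs i) z"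
        and g_eq: "g = (\<Sum>i<n. cmp x (xs i) z (hs i) (gs i))"
      using factor[OF \<open>cat_less H x z\<close> g] by blast
    have "act z y h (act x z g p) =
        (\<Sum>i<n. act (xs i) y (cmp (xs i) z y h (hs i)) (act x (xs i) (gs i) p))"
      unfolding g_eq using fac h p by (intro act_act_sum_cmp) auto
    also have "\<dots> = 0"
      using fac x h p unfolding C_def by (intro sum.neutral) (simp add: A cmp_closed)
    finally show ?thesis .
  qed
  ultimately show ?thesis
    unfolding contrafinite_via_def by blast
qed

lemma (in E_module) contrafinite_via_everywhere:
  assumes "left_strictly_locally_finite sc H cmp" "finite B"
    and outside: "\<And>z. z \<notin> B \<Longrightarrow> contrafinite_via H P act z y"
  shows "contrafinite_via H P act z y"
proof (rule strict_order_induct_outside_finite[where V = "\<lambda>z. contrafinite_via H P act z y",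
      OF transp_cat_less irreflp_cat_less \<open>finite B\<close> outside])
  fix z
  assume IH: "\<And>w. cat_less H w z \<Longrightarrow> contrafinite_via H P act w y"
  obtain X where "finite X" and X_below: "\<forall>w\<in>X. cat_less H w z"
    and factor: "\<forall>x f. cat_less H x z \<longrightarrow> f \<in> H x z \<longrightarrow>
      (\<exists>(n::nat) xs g h. (\<forall>i<n. xs i \<in> X \<and> g i \<in> H x (xs i) \<and> h i \<in> H (xs i) z) \<and>
        f = (\<Sum>i<n. cmp x (xs i) z (h i) (g i)))"
    using assms(1) unfolding left_strictly_locally_finite_def by blast
  have "finite {u. cat_le H z u \<and> cat_le H u z}"
    using assms(1) unfolding left_strictly_locally_finite_def locally_finite_cat_def by blast
  from this \<open>finite X\<close> show "contrafinite_via H P act z y"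
    by (rule contrafinite_via_if_factors_through) (use factor IH X_below in auto)
qed

lemma module_morphism_zero:
  assumes "E_module sc H cmp ident scP P actP" "module_morphism H scP P actP scT T actT \<phi>"
  shows "\<phi> x 0 = 0"
proof -
  have "0 \<in> P x" using assms(1) by (rule E_module.zero_in_fiber)
  then have "\<phi> x (0 + 0) = \<phi> x 0 + \<phi> x 0"
    using assms(2) unfolding module_morphism_def by blast
  then show ?thesis by simp
qed

lemma contrafinite_via_of_extension:
  assumes P: "E_module sc H cmp ident scP P actP" and T: "E_module sc H cmp ident scT T actT"
    and \<phi>: "module_morphism H scP P actP scT T actT \<phi>"
    and \<psi>: "module_morphism H scT T actT scQ Q actQ \<psi>"
    and exact: "short_exact P T Q \<phi> \<psi>"
    and "contrafinite H Q actQ"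
    and P_vanishes: "\<And>h p. h \<in> H z y \<Longrightarrow> p \<in> P z \<Longrightarrow> actP z y h p = 0"
  shows "contrafinite_via H T actT z y"
proof -
  obtain A where "finite A" and A: "\<And>x g q. x \<notin> A \<Longrightarrow> g \<in> H x z \<Longrightarrow> q \<in> Q x \<Longrightarrow> actQ x z g q = 0"
    using \<open>contrafinite H Q actQ\<close> unfolding contrafinite_def by meson
  have "actT z y h (actT x z g t) = 0"
    if x: "x \<notin> A" and g: "g \<in> H x z" and h: "h \<in> H z y" and t: "t \<in> T x" for x g h t
  proof -
    have "\<psi> z (actT x z g t) = actQ x z g (\<psi> x t)"
      using \<psi> g t unfolding module_morphism_def by blast
    also have "\<dots> = 0"
      using \<psi> t A[OF x g] unfolding module_morphism_def by blast
    finally have "actT x z g t \<in> \<phi> z ` P z"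
      using exact E_module.act_closed[OF T g t] unfolding short_exact_def by blast
    then obtain p where p: "p \<in> P z" and "actT x z g t = \<phi> z p" by blast
    then have "actT z y h (actT x z g t) = \<phi> y (actP z y h p)"
      using \<phi> h unfolding module_morphism_def by simp
    also have "\<dots> = 0"
      using P_vanishes[OF h p] module_morphism_zero[OF P \<phi>] by simp
    finally show ?thesis .
  qed
  with \<open>finite A\<close> show ?thesis
    unfolding contrafinite_via_def by blast
qed

theorem lemma4p8:
  fixes sc :: "'k::field \<Rightarrow> 'm::ab_group_add \<Rightarrow> 'm"
    and H :: "'o \<Rightarrow> 'o \<Rightarrow> 'm set"
    and cmp :: "'o \<Rightarrow> 'o \<Rightarrow> 'o \<Rightarrow> 'm \<Rightarrow> 'm \<Rightarrow> 'm"
    and ident :: "'o \<Rightarrow> 'm"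
    and scP :: "'k \<Rightarrow> 'v::ab_group_add \<Rightarrow> 'v" and P :: "'o \<Rightarrow> 'v set"
    and actP :: "'o \<Rightarrow> 'o \<Rightarrow> 'm \<Rightarrow> 'v \<Rightarrow> 'v"
    and scT :: "'k \<Rightarrow> 'w::ab_group_add \<Rightarrow> 'w" and T :: "'o \<Rightarrow> 'w set"
    and actT :: "'o \<Rightarrow> 'o \<Rightarrow> 'm \<Rightarrow> 'w \<Rightarrow> 'w"
    and scQ :: "'k \<Rightarrow> 'u::ab_group_add \<Rightarrow> 'u" and Q :: "'o \<Rightarrow> 'u set"
    and actQ :: "'o \<Rightarrow> 'o \<Rightarrow> 'm \<Rightarrow> 'u \<Rightarrow> 'u"
    and \<phi> :: "'o \<Rightarrow> 'v \<Rightarrow> 'w" and \<psi> :: "'o \<Rightarrow> 'w \<Rightarrow> 'u"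
  assumes "klin_cat sc H cmp ident"
    and "left_strictly_locally_finite sc H cmp"
    and "left_module sc H cmp ident scP P actP"
    and "left_module sc H cmp ident scT T actT"
    and "left_module sc H cmp ident scQ Q actQ"
    and "module_morphism H scP P actP scT T actT \<phi>"
    and "module_morphism H scT T actT scQ Q actQ \<psi>"
    and "short_exact P T Q \<phi> \<psi>"
    and "contrafinite H P actP"
    and "contrafinite H Q actQ"
  shows "contrafinite H T actT"
proof -
  have P: "E_module sc H cmp ident scP P actP" and T: "E_module sc H cmp ident scT T actT"
    using assms(1,3,4) by (auto intro: E_module.intro)
  have "contrafinite_via H T actT y y" for y
  proof -
    obtain B where "finite B"
      and B: "\<And>z h p. z \<notin> B \<Longrightarrow> h \<in> H z y \<Longrightarrow> p \<in> P z \<Longrightarrow> actP z y h p = 0"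
      using assms(9) unfolding contrafinite_def by meson
    have "contrafinite_via H T actT z y" if "z \<notin> B" for z
      using P T assms(6-8,10) by (rule contrafinite_via_of_extension) (rule B[OF that])
    with assms(2) \<open>finite B\<close> show ?thesis
      by (rule E_module.contrafinite_via_everywhere[OF T])
  qed
  then show ?thesis
    by (rule E_module.contrafinite_if_via_self[OF T])
qed

end
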